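(* Let $n$ be a positive integer and $\alpha,\beta$ non-negative real numbers with $\beta\neq 0$, and suppose that either $\alpha<\beta<3\alpha$ or $\beta<\alpha<3\beta$. Let $Q\in\mathcal{H}[1,n]$ satisfy $$Q(z)\prec \frac{1+z}{1-z}+\frac{2nz}{(1-z)\big((\alpha+\beta)+(\alpha-\beta)z\big)}.$$ If $p\in\mathcal{H}[1,n]$ satisfies the differential equation $$p(z)Q(z)+\frac{zp'(z)}{\beta p(z)+\alpha}=1\qquad(z\in\mathbb{D}),$$ then $p(z)\prec \dfrac{1-z}{1+z}$.
   Context: $\mathbb{D}$ is the open unit disk. $\mathcal{H}[1,n]$ is the class of functions analytic in $\mathbb{D}$ of the form $1+a_nz^n+a_{n+1}z^{n+1}+\cdots$. $f\prec F$ means $f=F\circ\omega$ for some analytic $\omega:\mathbb{D}\to\mathbb{D}$ with $\omega(0)=0$. *)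

theory Defs
  imports "HOL-Analysis.Analysis"
begin

abbreviation unit_disk :: "complex set" where
  "unit_disk \<equiv> ball 0 1"

text \<open>The class H[1,n]: functions analytic in the unit disk of the form
  1 + a_n z^n + a_(n+1) z^(n+1) + ..., i.e. f(0) = 1 and the derivatives of
  orders 1, ..., n-1 vanish at 0.\<close>
definition H1 :: "nat \<Rightarrow> (complex \<Rightarrow> complex) set" where
  "H1 n = {f. f holomorphic_on unit_disk \<and> f 0 = 1 \<and>
              (\<forall>k. 0 < k \<and> k < n \<longrightarrow> (deriv ^^ k) f 0 = 0)}"

definition subordinate :: "(complex \<Rightarrow> complex) \<Rightarrow> (complex \<Rightarrow> complex) \<Rightarrow> bool"
  (infix "\<prec>\<^sub>D" 50) where
  "f \<prec>\<^sub>D F \<longleftrightarrow> (\<exists>w. w holomorphic_on unit_disk \<and> w ` unit_disk \<subseteq> unit_disk \<and>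
        w 0 = 0 \<and> (\<forall>z\<in>unit_disk. f z = F (w z)))"

end

theory Submission
  imports Defs "HOL-Complex_Analysis.Complex_Analysis"
begin

(* If Re p is not positive on the disk, let z0 be a point of least modulus with Re p(z0) <= 0.
   Then p(z0) = i rho and Re p >= 0 on |z| <= |z0|, so (1 - p)/(1 + p), which vanishes to order n
   at 0, attains its maximal modulus 1 on that disk at z0; by Jack's lemma this gives the
   Miller-Mocanu estimate: z0 p'(z0) = sigma is real and sigma <= -n (1 + rho^2)/2.
   In the Cayley variable w = (1 + z)/(1 - z) the dominant of Q becomes
   h(w) = w + n (w^2 - 1)/(2 (alpha w + beta)), so Q(z0) = h(X) with Re X > 0.  The differential
   equation at z0 then reads h(X) = h(Y) - c/(alpha Y + beta) with Y = 1/(i rho) and c >= 0, i.e.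
   (X - Y) M = -2c where Re M > 0; but two factors from the right half plane never multiply to a
   non-positive real.  Hence Re p > 0, which is the claimed subordination.
   Only alpha, beta > 0 is used: the bounds beta < 3 alpha resp. alpha < 3 beta, n > 0, Q in H[1,n]
   and the non-vanishing of beta p + alpha do not enter. *)

lemma norm_one_minus_le_norm_one_plus_iff:
  fixes w :: complex
  shows "norm (1 - w) \<le> norm (1 + w) \<longleftrightarrow> 0 \<le> Re w"
proof -
  have "(norm (1 + w))\<^sup>2 = (norm (1 - w))\<^sup>2 + 4 * Re w"
    unfolding cmod_power2 by (simp add: power2_eq_square algebra_simps)
  moreover have "norm (1 - w) \<le> norm (1 + w) \<longleftrightarrow> (norm (1 - w))\<^sup>2 \<le> (norm (1 + w))\<^sup>2"
    by simp
  ultimately show ?thesis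
    by linarith
qed

lemma norm_one_minus_less_norm_one_plus_iff:
  fixes w :: complex
  shows "norm (1 - w) < norm (1 + w) \<longleftrightarrow> 0 < Re w"
proof -
  have "(norm (1 + w))\<^sup>2 = (norm (1 - w))\<^sup>2 + 4 * Re w"
    unfolding cmod_power2 by (simp add: power2_eq_square algebra_simps)
  moreover have "norm (1 - w) < norm (1 + w) \<longleftrightarrow> (norm (1 - w))\<^sup>2 < (norm (1 + w))\<^sup>2"
    by (meson not_le power_mono_iff norm_ge_zero zero_less_numeral)
  ultimately show ?thesis
    by linarith
qed

lemma Re_cayley_pos:
  fixes u :: complex
  assumes "norm u < 1"
  shows "0 < Re ((1 + u) / (1 - u))"
proof -
  have "Re ((1 + u) / (1 - u)) = (1 - (norm u)\<^sup>2) / (norm (1 - u))\<^sup>2"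
    unfolding Re_divide cmod_power2 by (simp add: power2_eq_square algebra_simps)
  moreover have "u \<noteq> 1" using assms by auto
  ultimately show ?thesis
    using assms by (simp add: power_less_one_iff abs_less_iff)
qed

lemma Re_moebius_nonneg:
  fixes X :: complex and a b :: real
  assumes "0 \<le> a" "0 \<le> b" "0 \<le> Re X"
  shows "0 \<le> Re ((b * X + a) / (a * X + b))"
proof -
  have "Re ((b * X + a) / (a * X + b))
      = (a * b * ((norm X)\<^sup>2 + 1) + (a\<^sup>2 + b\<^sup>2) * Re X) / (norm (a * X + b))\<^sup>2"
    unfolding Re_divide cmod_power2 by (simp add: power2_eq_square algebra_simps)
  then show ?thesis
    using assms by simp
qed

lemma mult_Re_pos_not_nonpos_real:
  fixes z w :: complex and c :: real
  assumes "0 < Re z" "0 < Re w" "c \<le> 0"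
  shows "z * w \<noteq> of_real c"
proof
  assume "z * w = of_real c"
  moreover have "z \<noteq> 0"
    using assms(1) by auto
  ultimately have "w = of_real c / z"
    by (simp add: eq_divide_eq mult.commute)
  then have "Re w = c * Re z / (norm z)\<^sup>2"
    by (simp add: Re_divide cmod_power2)
  also have "\<dots> \<le> 0"
    using assms by (intro divide_nonpos_nonneg mult_nonpos_nonneg) auto
  finally show False
    using assms(2) by simp
qed

lemma holomorphic_factor_power_at_0:
  fixes f :: "complex \<Rightarrow> complex"
  assumes holf: "f holomorphic_on S" and "open S" "0 \<in> S"
    and vanish: "\<And>k. k < n \<Longrightarrow> (deriv ^^ k) f 0 = 0"
  obtains g where "g holomorphic_on S" "\<And>z. z \<in> S \<Longrightarrow> f z = z ^ n * g z"
proof -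
  define F where "F = fps_expansion f 0"
  have "f analytic_on {0}"
    using holf \<open>open S\<close> \<open>0 \<in> S\<close> analytic_at by blast
  then have F: "f has_fps_expansion F"
    unfolding F_def by (rule analytic_at_imp_has_fps_expansion_0)
  have F_low: "fps_nth F k = 0" if "k < n" for k
    using vanish[OF that] by (simp add: F_def fps_expansion_def)
  define g where "g = (\<lambda>z. if z = 0 then fps_nth F n else f z / z ^ n)"
  obtain T where T: "open T" "0 \<in> T" "g holomorphic_on T"
  proof (cases "F = 0")
    case True
    from F obtain T where "open T" "0 \<in> T" "\<And>z. z \<in> T \<Longrightarrow> f z = 0"
      unfolding True has_fps_expansion_def eventually_nhds by force
    moreover from this have "g holomorphic_on T \<longleftrightarrow> (\<lambda>_. 0) holomorphic_on T"
      by (intro holomorphic_cong) (auto simp: g_def True)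
    ultimately show ?thesis
      using that by auto
  next
    case False
    then have "g has_fps_expansion fps_shift n F"
      unfolding g_def using F F_low by (intro has_fps_expansion_shift subdegree_geI) auto
    then show ?thesis
      using that by (metis has_fps_expansion_imp_holomorphic)
  qed
  have "(\<lambda>z. f z / z ^ n) holomorphic_on S - {0}"
    by (intro holomorphic_intros holomorphic_on_subset[OF holf]) auto
  then have "g holomorphic_on S - {0}"
    by (rule holomorphic_transform) (simp add: g_def)
  with T have "g holomorphic_on (S - {0}) \<union> T"
    by (intro holomorphic_on_Un open_delete \<open>open S\<close>) auto
  then have "g holomorphic_on S"
    by (rule holomorphic_on_subset) (use T in auto)
  moreover have "f z = z ^ n * g z" if "z \<in> S" for z
    using F_low[of 0] has_fps_expansion_imp_0_eq_fps_nth_0[OF F]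
    by (cases "z = 0") (auto simp: g_def power_0_left)
  ultimately show ?thesis
    using that by blast
qed

lemma H1_factor:
  assumes "p \<in> H1 n"
  obtains g where "g holomorphic_on unit_disk" "\<And>z. z \<in> unit_disk \<Longrightarrow> p z = 1 + z ^ n * g z"
proof -
  have hol: "p holomorphic_on unit_disk" and p0: "p 0 = 1"
    and vanish: "\<And>k. 0 < k \<Longrightarrow> k < n \<Longrightarrow> (deriv ^^ k) p 0 = 0"
    using assms by (auto simp: H1_def)
  have hol': "(\<lambda>z. p z - 1) holomorphic_on unit_disk"
    using hol by (intro holomorphic_intros)
  have vanish': "(deriv ^^ k) (\<lambda>z. p z - 1) 0 = 0" if "k < n" for k
  proof (cases "k = 0")
    case False
    have "(deriv ^^ k) (\<lambda>z. p z - 1) 0 = (deriv ^^ k) p 0 - (deriv ^^ k) (\<lambda>z. 1) 0"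
      by (rule higher_deriv_diff[where S = unit_disk]) (auto intro: hol)
    then show ?thesis
      using vanish False that by simp
  qed (simp add: p0)
  then obtain g where "g holomorphic_on unit_disk" "\<And>z. z \<in> unit_disk \<Longrightarrow> p z - 1 = z ^ n * g z"
    using holomorphic_factor_power_at_0[OF hol' open_ball _ vanish'] by auto
  then show ?thesis
    using that by (metis diff_eq_eq add.commute)
qed

lemma Re_zero_at_least_modulus:
  fixes f :: "complex \<Rightarrow> complex"
  assumes cont: "continuous_on (ball 0 r) f" and "0 < Re (f 0)"
    and "z1 \<in> ball 0 r" "Re (f z1) \<le> 0"
  obtains z0 where "z0 \<noteq> 0" "norm z0 < r" "Re (f z0) = 0"
    "\<And>z. z \<in> cball 0 (norm z0) \<Longrightarrow> 0 \<le> Re (f z)"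
proof -
  define K where "K = cball 0 (norm z1) \<inter> (\<lambda>z. Re (f z)) -` {..0}"
  have "cball 0 (norm z1) \<subseteq> ball 0 r"
    using assms(3) by auto
  then have "continuous_on (cball 0 (norm z1)) (\<lambda>z. Re (f z))"
    by (intro continuous_intros continuous_on_subset[OF cont])
  then have "closed K"
    unfolding K_def by (rule continuous_closed_preimage) auto
  then have "compact K"
    by (simp add: compact_eq_bounded_closed K_def bounded_Int)
  moreover have "z1 \<in> K"
    using assms(4) by (simp add: K_def)
  ultimately obtain z0 where "z0 \<in> K" and least: "\<And>z. z \<in> K \<Longrightarrow> norm z0 \<le> norm z"
    using continuous_attains_inf[OF _ _ continuous_on_norm_id] by (metis empty_iff)
  then have z0: "norm z0 \<le> norm z1" "Re (f z0) \<le> 0"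
    by (auto simp: K_def)
  then have "z0 \<noteq> 0" "norm z0 < r"
    using assms(2,3) by auto
  have inner: "0 < Re (f z)" if "z \<in> ball 0 (norm z0)" for z
    using that least[of z] z0(1) by (force simp: K_def)
  have nonneg: "0 \<le> Re (f z)" if "z \<in> cball 0 (norm z0)" for z
  proof (rule continuous_ge_on_closure[where f = "\<lambda>w. Re (f w)" and S = "ball 0 (norm z0)"])
    show "continuous_on (closure (ball 0 (norm z0))) (\<lambda>z. Re (f z))"
      using \<open>z0 \<noteq> 0\<close> \<open>norm z0 < r\<close>
      by (auto intro!: continuous_intros continuous_on_subset[OF cont])
  qed (use that \<open>z0 \<noteq> 0\<close> inner in \<open>auto intro: less_imp_le\<close>)
  then have "Re (f z0) = 0"
    using z0(2) by force
  with \<open>z0 \<noteq> 0\<close> \<open>norm z0 < r\<close> nonneg that show ?thesis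
    by blast
qed

lemma Im_deriv_zero_at_circle_min:
  fixes f :: "complex \<Rightarrow> complex"
  assumes deriv: "(f has_field_derivative f') (at z0)"
    and min: "\<And>t. Re (f z0) \<le> Re (f (z0 * exp (\<i> * of_real t)))"
  shows "Im (z0 * f') = 0"
proof -
  have "((\<lambda>t. z0 * exp (\<i> * t)) has_field_derivative z0 * \<i>) (at 0)"
    by (auto intro!: derivative_eq_intros)
  then have "((\<lambda>t. f (z0 * exp (\<i> * t))) has_field_derivative f' * (z0 * \<i>)) (at (of_real 0))"
    using DERIV_chain2[of f f'] deriv by simp
  then have "((\<lambda>t. Re (f (z0 * exp (\<i> * of_real t)))) has_real_derivative Re (f' * (z0 * \<i>))) (at 0)"
    by (intro has_field_derivative_Re has_vector_derivative_real_field)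
  then have "Re (f' * (z0 * \<i>)) = 0"
    by (rule DERIV_local_min[OF _ zero_less_one]) (use min in auto)
  then show ?thesis
    by (simp add: algebra_simps)
qed

lemma Schwarz_Lemma_power_cball:
  fixes G :: "complex \<Rightarrow> complex"
  assumes "0 < r" and holG: "G holomorphic_on cball 0 r"
    and bound: "\<And>z. z \<in> cball 0 r \<Longrightarrow> norm (z ^ n * G z) \<le> 1"
    and "z \<in> cball 0 r"
  shows "norm (z ^ n * G z) \<le> (norm z / r) ^ n"
proof -
  have "norm (G z) \<le> 1 / r ^ n"
  proof (rule maximum_modulus_frontier[where S = "cball 0 r" and f = G])
    show "G holomorphic_on interior (cball 0 r)"
      using holG by (rule holomorphic_on_subset) auto
    show "continuous_on (closure (cball 0 r)) G"
      using holG by (simp add: holomorphic_on_imp_continuous_on)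
    fix w :: complex assume "w \<in> frontier (cball 0 r)"
    then have "norm w = r" "w \<in> cball 0 r"
      using \<open>0 < r\<close> by auto
    then have "r ^ n * norm (G w) \<le> 1"
      using bound[of w] by (simp add: norm_mult norm_power)
    then show "norm (G w) \<le> 1 / r ^ n"
      using \<open>0 < r\<close> by (simp add: field_simps)
  qed (use \<open>z \<in> cball 0 r\<close> in auto)
  then have "norm z ^ n * norm (G z) \<le> norm z ^ n * (1 / r ^ n)"
    by (rule mult_left_mono) simp
  then show ?thesis
    by (simp add: norm_mult norm_power power_divide)
qed

lemma Re_log_deriv_ge_at_radial_max:
  fixes W :: "complex \<Rightarrow> complex"
  assumes deriv: "(W has_field_derivative W') (at z0)" and "W z0 \<noteq> 0"
    and radial: "\<And>h. 0 < h \<Longrightarrow> h < 1 \<Longrightarrow> norm (W (of_real (1 - h) * z0)) \<le> (1 - h) ^ n * norm (W z0)"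
  shows "real n \<le> Re (z0 * W' / W z0)"
proof (rule ccontr)
  assume "\<not> real n \<le> Re (z0 * W' / W z0)"
  then have neg: "- real n + Re (z0 * W' / W z0) < 0"
    by simp
  define \<phi> where "\<phi> = (\<lambda>h::real. (1 - h) ^ n - Re (W ((1 - of_real h) * z0) / W z0))"
  have "((\<lambda>w. (1 - w) * z0) has_field_derivative - z0) (at 0)"
    by (auto intro!: derivative_eq_intros)
  then have "((\<lambda>w. W ((1 - w) * z0)) has_field_derivative W' * - z0) (at 0)"
    using deriv by (intro DERIV_chain2) auto
  then have "((\<lambda>w. W ((1 - w) * z0) / W z0) has_field_derivative W' * - z0 / W z0) (at 0)"
    by (rule DERIV_cdivide)
  then have "((\<lambda>w. W ((1 - w) * z0) / W z0) has_field_derivative - (z0 * W' / W z0)) (at (of_real 0))"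
    by (simp add: mult.commute)
  then have "((\<lambda>h. Re (W ((1 - of_real h) * z0) / W z0)) has_real_derivative - Re (z0 * W' / W z0)) (at 0)"
    using has_field_derivative_Re[OF has_vector_derivative_real_field] by fastforce
  moreover have "((\<lambda>h. (1 - h) ^ n) has_real_derivative - real n) (at 0)"
    by (auto intro!: derivative_eq_intros)
  ultimately have "(\<phi> has_real_derivative - real n + Re (z0 * W' / W z0)) (at 0)"
    unfolding \<phi>_def using DERIV_diff by fastforce
  then obtain d where "0 < d" and decreasing: "\<And>h. 0 < h \<Longrightarrow> h < d \<Longrightarrow> \<phi> (0 + h) < \<phi> 0"
    using has_real_derivative_neg_dec_right[OF _ neg] by (metis UNIV_I)
  define h where "h = min (d / 2) (1 / 2)"
  have "0 < h" "h < d" "h < 1"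
    using \<open>0 < d\<close> by (auto simp: h_def)
  have "Re (W (of_real (1 - h) * z0) / W z0) \<le> norm (W (of_real (1 - h) * z0) / W z0)"
    by (rule complex_Re_le_cmod)
  also have "\<dots> \<le> (1 - h) ^ n"
    using radial[OF \<open>0 < h\<close> \<open>h < 1\<close>] \<open>W z0 \<noteq> 0\<close> by (simp add: norm_divide divide_le_eq)
  finally have "0 \<le> \<phi> h"
    by (simp add: \<phi>_def)
  moreover have "\<phi> 0 = 0"
    using \<open>W z0 \<noteq> 0\<close> by (simp add: \<phi>_def)
  ultimately show False
    using decreasing[OF \<open>0 < h\<close> \<open>h < d\<close>] by simp
qed

lemma Jack_lemma:
  fixes W G :: "complex \<Rightarrow> complex"
  assumes "0 < r" and holG: "G holomorphic_on cball 0 r"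
    and W_G: "\<And>z. z \<in> cball 0 r \<Longrightarrow> W z = z ^ n * G z"
    and bound: "\<And>z. z \<in> cball 0 r \<Longrightarrow> norm (W z) \<le> 1"
    and "norm z0 = r" "norm (W z0) = 1"
    and deriv: "(W has_field_derivative W') (at z0)"
  shows "real n \<le> Re (z0 * W' / W z0)"
proof (rule Re_log_deriv_ge_at_radial_max[OF deriv])
  show "W z0 \<noteq> 0"
    using \<open>norm (W z0) = 1\<close> by auto
  fix h :: real
  assume "0 < h" "h < 1"
  then have "norm (of_real (1 - h) * z0) = (1 - h) * r"
    by (simp only: norm_mult norm_of_real \<open>norm z0 = r\<close>)
  moreover from this have "of_real (1 - h) * z0 \<in> cball 0 r"
    using \<open>0 < h\<close> \<open>0 < r\<close> by (simp add: mult_le_cancel_right1)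
  ultimately show "norm (W (of_real (1 - h) * z0)) \<le> (1 - h) ^ n * norm (W z0)"
    using Schwarz_Lemma_power_cball[OF \<open>0 < r\<close> holG _ \<open>of_real (1 - h) * z0 \<in> cball 0 r\<close>]
      W_G bound \<open>0 < r\<close> \<open>norm (W z0) = 1\<close> by simp
qed

lemma Miller_Mocanu_lemma:
  fixes p g :: "complex \<Rightarrow> complex"
  assumes holp: "p holomorphic_on unit_disk" and holg: "g holomorphic_on unit_disk"
    and factor: "\<And>z. z \<in> unit_disk \<Longrightarrow> p z = 1 + z ^ n * g z"
    and "z0 \<noteq> 0" "norm z0 < 1" "Re (p z0) = 0"
    and nonneg: "\<And>z. z \<in> cball 0 (norm z0) \<Longrightarrow> 0 \<le> Re (p z)"
  obtains \<sigma> where "z0 * deriv p z0 = of_real \<sigma>" "\<sigma> \<le> - real n * (1 + (Im (p z0))\<^sup>2) / 2"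
proof -
  define r where "r = norm z0"
  define \<rho> where "\<rho> = Im (p z0)"
  define \<sigma> where "\<sigma> = Re (z0 * deriv p z0)"
  have "0 < r" and disk: "cball 0 r \<subseteq> unit_disk"
    using \<open>z0 \<noteq> 0\<close> \<open>norm z0 < 1\<close> by (auto simp: r_def)
  have pz0: "p z0 = \<i> * of_real \<rho>"
    using \<open>Re (p z0) = 0\<close> by (simp add: \<rho>_def complex_eq_iff)
  have Dp: "(p has_field_derivative deriv p z0) (at z0)"
    using holp \<open>norm z0 < 1\<close> by (intro holomorphic_derivI[OF holp]) auto
  have "Im (z0 * deriv p z0) = 0"
    using Dp by (rule Im_deriv_zero_at_circle_min) (use nonneg \<open>Re (p z0) = 0\<close> in \<open>simp add: norm_mult\<close>)
  then have s: "z0 * deriv p z0 = of_real \<sigma>"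
    by (simp add: \<sigma>_def complex_eq_iff)
  have nz: "1 + p z \<noteq> 0" if "z \<in> cball 0 r" for z
    using nonneg[of z] that by (auto simp: r_def complex_eq_iff)
  define W where "W = (\<lambda>z. (1 - p z) / (1 + p z))"
  define G where "G = (\<lambda>z. - g z / (1 + p z))"
  have "G holomorphic_on cball 0 r"
    unfolding G_def using disk nz
    by (intro holomorphic_intros holomorphic_on_subset[OF holp] holomorphic_on_subset[OF holg]) auto
  moreover have "W z = z ^ n * G z" if "z \<in> cball 0 r" for z
    using factor[of z] nz[OF that] disk that by (auto simp: W_def G_def field_simps)
  moreover have "norm (W z) \<le> 1" if "z \<in> cball 0 r" for z
    using nonneg[of z] nz[OF that] that
    by (simp add: W_def r_def norm_divide divide_le_eq_1 norm_one_minus_le_norm_one_plus_iff)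
  moreover have "1 - p z0 \<noteq> 0" "1 + p z0 \<noteq> 0" "norm (1 - p z0) = norm (1 + p z0)"
    by (simp_all add: pz0 complex_eq_iff cmod_def)
  moreover from this have "norm (W z0) = 1"
    by (simp add: W_def norm_divide)
  moreover have "(W has_field_derivative - 2 * deriv p z0 / (1 + p z0)\<^sup>2) (at z0)"
    unfolding W_def using Dp \<open>1 + p z0 \<noteq> 0\<close>
    by (auto intro!: derivative_eq_intros simp: field_simps power2_eq_square)
  ultimately have "real n \<le> Re (z0 * (- 2 * deriv p z0 / (1 + p z0)\<^sup>2) / W z0)"
    using \<open>0 < r\<close> by (intro Jack_lemma[where G = G and r = r]) (auto simp: r_def)
  also have "z0 * (- 2 * deriv p z0 / (1 + p z0)\<^sup>2) / W z0 = - 2 * of_real \<sigma> / ((1 + p z0) * (1 - p z0))"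
    using \<open>1 - p z0 \<noteq> 0\<close> \<open>1 + p z0 \<noteq> 0\<close> s[symmetric] by (simp add: W_def divide_simps power2_eq_square)
  also have "(1 + p z0) * (1 - p z0) = of_real (1 + \<rho>\<^sup>2)"
    by (simp add: pz0 algebra_simps power2_eq_square)
  finally have "real n * (1 + \<rho>\<^sup>2) \<le> - 2 * \<sigma>"
    by (simp add: field_simps add_pos_nonneg)
  then show ?thesis
    using that s by (simp add: \<rho>_def)
qed

lemma subordinate_cayley_if_Re_pos:
  fixes f :: "complex \<Rightarrow> complex"
  assumes holf: "f holomorphic_on unit_disk" and "f 0 = 1"
    and pos: "\<And>z. z \<in> unit_disk \<Longrightarrow> 0 < Re (f z)"
  shows "f \<prec>\<^sub>D (\<lambda>z. (1 - z) / (1 + z))"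
  unfolding subordinate_def
proof (intro exI conjI)
  have nz: "1 + f z \<noteq> 0" if "z \<in> unit_disk" for z
    using pos[OF that] by (auto simp: complex_eq_iff)
  show "(\<lambda>z. (1 - f z) / (1 + f z)) holomorphic_on unit_disk"
    by (intro holomorphic_intros holf nz)
  show "(\<lambda>z. (1 - f z) / (1 + f z)) ` unit_disk \<subseteq> unit_disk"
    using pos nz by (auto simp: norm_divide divide_less_eq_1 norm_one_minus_less_norm_one_plus_iff)
  show "(1 - f 0) / (1 + f 0) = 0"
    by (simp add: \<open>f 0 = 1\<close>)
  show "\<forall>z\<in>unit_disk. f z = (1 - (1 - f z) / (1 + f z)) / (1 + (1 - f z) / (1 + f z))"
  proof
    fix z :: complex assume "z \<in> unit_disk"
    then have "1 - (1 - f z) / (1 + f z) = 2 * f z / (1 + f z)" "1 + (1 - f z) / (1 + f z) = 2 / (1 + f z)"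
      using nz by (simp_all add: field_simps)
    then show "f z = (1 - (1 - f z) / (1 + f z)) / (1 + (1 - f z) / (1 + f z))"
      using nz \<open>z \<in> unit_disk\<close> by simp
  qed
qed

definition cayley_dominant :: "real \<Rightarrow> real \<Rightarrow> nat \<Rightarrow> complex \<Rightarrow> complex" where
  "cayley_dominant a b n w = w + of_nat n * (w\<^sup>2 - 1) / (2 * (of_real a * w + of_real b))"

lemma cayley_dominant_cayley:
  fixes u :: complex and a b :: real
  assumes "0 < a" "0 < b" "norm u < 1"
  shows "(1 + u) / (1 - u) + 2 * of_nat n * u / ((1 - u) * (of_real (a + b) + of_real (a - b) * u))
       = cayley_dominant a b n ((1 + u) / (1 - u))"
proof -
  define v e where "v = 1 - u" and "e = of_real (a + b) + of_real (a - b) * u"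
  have "\<bar>Re u\<bar> < 1"
    using abs_Re_le_cmod[of u] assms(3) by linarith
  then have "0 < 1 + Re u" "0 < 1 - Re u"
    by linarith+
  then have "0 < a * (1 + Re u) + b * (1 - Re u)"
    using assms(1,2) by (simp add: add_pos_pos)
  also have "\<dots> = Re e"
    by (simp add: e_def algebra_simps)
  finally have "e \<noteq> 0"
    by auto
  moreover have "v \<noteq> 0"
    using assms(3) by (auto simp: v_def)
  moreover have "of_real a * (1 + u) + of_real b * v = e"
    by (simp add: v_def e_def algebra_simps)
  ultimately show ?thesis
    unfolding cayley_dominant_def v_def[symmetric] e_def[symmetric]
    by (simp add: field_simps power2_eq_square) (simp add: v_def algebra_simps)
qed

lemma cayley_dominant_of_subordinate:
  fixes Q :: "complex \<Rightarrow> complex" and a b :: real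
  assumes "0 < a" "0 < b"
    and "Q \<prec>\<^sub>D (\<lambda>z. (1 + z) / (1 - z) + 2 * of_nat n * z /
           ((1 - z) * (complex_of_real (a + b) + complex_of_real (a - b) * z)))"
    and "z \<in> unit_disk"
  obtains X where "0 < Re X" "Q z = cayley_dominant a b n X"
proof -
  obtain \<omega> where \<omega>: "\<omega> ` unit_disk \<subseteq> unit_disk"
    and Q: "\<forall>z\<in>unit_disk. Q z = (1 + \<omega> z) / (1 - \<omega> z) + 2 * of_nat n * \<omega> z /
           ((1 - \<omega> z) * (complex_of_real (a + b) + complex_of_real (a - b) * \<omega> z))"
    using assms(3) unfolding subordinate_def by blast
  have "norm (\<omega> z) < 1"
    using \<omega> assms(4) by (metis image_subset_iff mem_ball_0)
  then show ?thesis
    using that Re_cayley_pos Q assms(4) cayley_dominant_cayley[OF assms(1,2)] by metis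
qed

lemma cayley_dominant_diff:
  fixes X Y :: complex and a b :: real
  assumes "of_real a * X + of_real b \<noteq> 0" and "of_real a * Y + of_real b \<noteq> 0"
  shows "2 * (of_real a * Y + of_real b) * (cayley_dominant a b n X - cayley_dominant a b n Y)
       = (X - Y) * (2 * (of_real a * Y + of_real b) + of_nat n * Y
                    + of_nat n * ((of_real b * X + of_real a) / (of_real a * X + of_real b)))"
proof -
  define A B where "A = of_real a * X + of_real b" and "B = of_real a * Y + of_real b"
  have "A \<noteq> 0" "B \<noteq> 0"
    using assms by (simp_all add: A_def B_def)
  then show ?thesis
    unfolding cayley_dominant_def A_def[symmetric] B_def[symmetric]
    by (simp add: field_simps power2_eq_square) (simp add: A_def B_def algebra_simps)
qed

lemma cayley_dominant_ne:
  fixes X Y :: complex and a b c :: real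
  assumes "0 < a" "0 < b" "0 < Re X" "Re Y = 0" "0 \<le> c"
  shows "cayley_dominant a b n X \<noteq> cayley_dominant a b n Y - of_real c / (of_real a * Y + of_real b)"
proof
  assume eq: "cayley_dominant a b n X = cayley_dominant a b n Y - of_real c / (of_real a * Y + of_real b)"
  define R where "R = (of_real b * X + of_real a) / (of_real a * X + of_real b)"
  define M where "M = 2 * (of_real a * Y + of_real b) + of_nat n * Y + of_nat n * R"
  have "0 < Re (of_real a * X + of_real b)" and "0 < Re (of_real a * Y + of_real b)"
    using assms by (simp_all add: add_pos_pos)
  then have X: "of_real a * X + of_real b \<noteq> 0" and Y: "of_real a * Y + of_real b \<noteq> 0"
    by (metis less_irrefl zero_complex.sel(1))+
  have "(X - Y) * M = 2 * (of_real a * Y + of_real b) * (- of_real c / (of_real a * Y + of_real b))"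
    using cayley_dominant_diff[OF X Y, of n] eq by (simp add: M_def R_def)
  also have "\<dots> = of_real (-2 * c)"
    using Y by (simp add: field_simps)
  finally have "(X - Y) * M = of_real (-2 * c)" .
  moreover have "0 \<le> Re R"
    unfolding R_def using assms by (intro Re_moebius_nonneg) auto
  then have "0 < Re M"
    using assms by (simp add: M_def add_pos_nonneg)
  ultimately show False
    using mult_Re_pos_not_nonpos_real[of "X - Y" M "-2 * c"] assms by simp
qed

(* The Miller-Mocanu admissibility condition for psi(r, s) = r Q + s/(beta r + alpha). *)
lemma admissibility_condition:
  fixes X :: complex and a b \<rho> \<sigma> :: real
  assumes "0 < a" "0 < b" "0 < Re X" "\<sigma> \<le> - real n * (1 + \<rho>\<^sup>2) / 2"
  shows "\<i> * of_real \<rho> * cayley_dominant a b n X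
           + of_real \<sigma> / (of_real b * (\<i> * of_real \<rho>) + of_real a) \<noteq> 1"
proof (cases "\<rho> = 0")
  case True
  then show ?thesis
    using assms by (auto simp: complex_eq_iff add_nonneg_nonneg)
next
  case False
  define P where "P = \<i> * of_real \<rho>"
  define D where "D = of_real b * P + of_real a"
  define c where "c = (- \<sigma> - real n * (1 + \<rho>\<^sup>2) / 2) / \<rho>\<^sup>2"
  have "P \<noteq> 0" and "D \<noteq> 0"
    using False assms(1) by (auto simp: P_def D_def complex_eq_iff)
  have "of_nat n * (1 - P\<^sup>2) / 2 - of_real c * P\<^sup>2 = of_real (real n * (1 + \<rho>\<^sup>2) / 2 + c * \<rho>\<^sup>2)"
    by (simp add: P_def power_mult_distrib algebra_simps)
  also have "\<dots> = - of_real \<sigma>"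
    using False by (simp add: c_def)
  finally have numerator: "of_nat n * (1 - P\<^sup>2) / 2 - of_real c * P\<^sup>2 = - of_real \<sigma>" .
  have "of_real a * (1 / P) + of_real b = D / P"
    using \<open>P \<noteq> 0\<close> by (simp add: D_def field_simps)
  then have "(cayley_dominant a b n (1 / P) - of_real c / (of_real a * (1 / P) + of_real b)) * P
      = 1 + (of_nat n * (1 - P\<^sup>2) / 2 - of_real c * P\<^sup>2) / D"
    using \<open>P \<noteq> 0\<close> \<open>D \<noteq> 0\<close> unfolding cayley_dominant_def
    by (simp add: field_simps power2_eq_square)
  also have "\<dots> = 1 - of_real \<sigma> / D"
    by (simp add: numerator)
  finally have Y: "cayley_dominant a b n (1 / P) - of_real c / (of_real a * (1 / P) + of_real b)
      = (1 - of_real \<sigma> / D) / P"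
    using \<open>P \<noteq> 0\<close> by (simp add: eq_divide_eq)
  have "Re (1 / P) = 0"
    by (simp add: P_def Re_divide)
  moreover have "0 \<le> c"
    using assms(4) by (simp add: c_def)
  ultimately have "cayley_dominant a b n X \<noteq> (1 - of_real \<sigma> / D) / P"
    unfolding Y[symmetric] by (intro cayley_dominant_ne assms(1-3))
  then show ?thesis
    using \<open>P \<noteq> 0\<close> unfolding P_def[symmetric] D_def[symmetric] by (auto simp: field_simps)
qed

theorem mainTheorem11:
  fixes n :: nat and \<alpha> \<beta> :: real and p Q :: "complex \<Rightarrow> complex"
  assumes "n > 0" and "\<alpha> \<ge> 0" and "\<beta> \<ge> 0" and "\<beta> \<noteq> 0"
    and "(\<alpha> < \<beta> \<and> \<beta> < 3 * \<alpha>) \<or> (\<beta> < \<alpha> \<and> \<alpha> < 3 * \<beta>)"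
    and "Q \<in> H1 n"
    and "Q \<prec>\<^sub>D (\<lambda>z. (1 + z) / (1 - z) + 2 * of_nat n * z /
           ((1 - z) * (complex_of_real (\<alpha> + \<beta>) + complex_of_real (\<alpha> - \<beta>) * z)))"
    and "p \<in> H1 n"
    and "\<forall>z\<in>unit_disk. complex_of_real \<beta> * p z + complex_of_real \<alpha> \<noteq> 0"
    and "\<forall>z\<in>unit_disk. p z * Q z + z * deriv p z /
           (complex_of_real \<beta> * p z + complex_of_real \<alpha>) = 1"
  shows "p \<prec>\<^sub>D (\<lambda>z. (1 - z) / (1 + z))"
proof -
  have "0 < \<alpha>" "0 < \<beta>"
    using assms(2-5) by linarith+
  have holp: "p holomorphic_on unit_disk" and "p 0 = 1"
    using assms(8) by (auto simp: H1_def)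
  obtain g where g: "g holomorphic_on unit_disk" "\<And>z. z \<in> unit_disk \<Longrightarrow> p z = 1 + z ^ n * g z"
    using H1_factor[OF assms(8)] by blast
  have pos: "0 < Re (p z)" if z: "z \<in> unit_disk" for z
  proof (rule ccontr)
    assume "\<not> 0 < Re (p z)"
    obtain z0 where z0: "z0 \<noteq> 0" "norm z0 < 1" "Re (p z0) = 0"
      "\<And>z. z \<in> cball 0 (norm z0) \<Longrightarrow> 0 \<le> Re (p z)"
      by (rule Re_zero_at_least_modulus[OF holomorphic_on_imp_continuous_on[OF holp] _ z])
        (use \<open>p 0 = 1\<close> \<open>\<not> 0 < Re (p z)\<close> in auto)
    obtain \<sigma> where \<sigma>: "z0 * deriv p z0 = of_real \<sigma>" "\<sigma> \<le> - real n * (1 + (Im (p z0))\<^sup>2) / 2"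
      using Miller_Mocanu_lemma[OF holp g z0] .
    obtain X where "0 < Re X" "Q z0 = cayley_dominant \<alpha> \<beta> n X"
      using cayley_dominant_of_subordinate[OF \<open>0 < \<alpha>\<close> \<open>0 < \<beta>\<close> assms(7)] z0(2) by auto
    moreover have "p z0 = \<i> * of_real (Im (p z0))"
      using z0(3) by (simp add: complex_eq_iff)
    ultimately show False
      using assms(10) z0(2) \<sigma>(1) admissibility_condition[OF \<open>0 < \<alpha>\<close> \<open>0 < \<beta>\<close> _ \<sigma>(2)]
      by (metis mem_ball_0)
  qed
  show ?thesis
    using holp \<open>p 0 = 1\<close> pos by (rule subordinate_cayley_if_Re_pos)
qed

end
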